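(* Let $G$ be a simple undirected graph and $s,t\in V(G)$. Then $s$ and $t$ lie in the same biconnected component $B$ of $G+st$, and $B = G_{s,t}+st$.
   Context: $G+st$ denotes the graph obtained from $G$ by adding the edge $st$ (equal to $G$ if $st\in E(G)$); for a subgraph $H$, $H+st$ is defined analogously. The $(s,t)$-relevant part $G_{s,t}$ of $G$ is the subgraph of $G$ induced by all vertices that lie on at least one (simple) $(s,t)$-path in $G$. Biconnected components are the classes of the equivalence relation on edges in which two edges are related if they are equal or lie on a common simple cycle; a biconnected component is regarded as the subgraph formed by such an edge class. *)

theory Defs
  imports Main
begin

definition simple_graph :: "'a set \<Rightarrow> 'a set set \<Rightarrow> bool" where
  "simple_graph V E \<longleftrightarrow> (\<forall>e\<in>E. \<exists>u v. e = {u, v} \<and> u \<noteq> v \<and> u \<in> V \<and> v \<in> V)"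

definition is_path :: "'a set set \<Rightarrow> 'a list \<Rightarrow> 'a \<Rightarrow> 'a \<Rightarrow> bool" where
  "is_path E p s t \<longleftrightarrow> p \<noteq> [] \<and> hd p = s \<and> last p = t \<and> distinct p \<and>
     (\<forall>i. Suc i < length p \<longrightarrow> {p ! i, p ! Suc i} \<in> E)"

definition cycle_edges :: "'a list \<Rightarrow> 'a set set" where
  "cycle_edges c = {{c ! i, c ! ((Suc i) mod length c)} | i. i < length c}"

definition is_cycle :: "'a set set \<Rightarrow> 'a list \<Rightarrow> bool" where
  "is_cycle E c \<longleftrightarrow> length c \<ge> 3 \<and> distinct c \<and> cycle_edges c \<subseteq> E"

definition bicon_rel :: "'a set set \<Rightarrow> 'a set \<Rightarrow> 'a set \<Rightarrow> bool" where
  "bicon_rel E e f \<longleftrightarrow> e = f \<or> (\<exists>c. is_cycle E c \<and> e \<in> cycle_edges c \<and> f \<in> cycle_edges c)"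

definition biconnected_component :: "'a set \<Rightarrow> 'a set set \<Rightarrow> 'a set \<times> 'a set set \<Rightarrow> bool" where
  "biconnected_component V E B \<longleftrightarrow>
     (\<exists>e\<in>E. snd B = {f \<in> E. bicon_rel E e f} \<and> fst B = \<Union>(snd B))"

definition add_edge :: "'a set \<times> 'a set set \<Rightarrow> 'a \<Rightarrow> 'a \<Rightarrow> 'a set \<times> 'a set set" where
  "add_edge G s t = (fst G \<union> {s, t}, snd G \<union> {{s, t}})"

definition relevant_part :: "'a set \<Rightarrow> 'a set set \<Rightarrow> 'a \<Rightarrow> 'a \<Rightarrow> 'a set \<times> 'a set set" where
  "relevant_part V E s t =
     (let R = {v. \<exists>p. is_path E p s t \<and> v \<in> set p} in (R, {e \<in> E. e \<subseteq> R}))"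

end

(*
  An edge f \<noteq> st lies on a common cycle with st in G + st iff f lies on an (s,t)-path of G:
  deleting st from such a cycle leaves an (s,t)-path, and closing an (s,t)-path with st
  gives a cycle. Hence the class of st consists of st and edges inside G_{s,t}. Conversely,
  let uv be an edge with u on an (s,t)-path P and v on an (s,t)-path Q. If v is not on P,
  walking along Q from v towards s and towards t, the first vertices met on P differ, so one
  of them, a, is not u (if v is on P, take a = v).
  Replacing the segment of P between u and a by the detour u, v, ..., a yields an
  (s,t)-path through uv.
*)

theory Submission
  imports Defs
begin

fun path_edges :: "'a list \<Rightarrow> 'a set set" where
  "path_edges (x # y # xs) = insert {x, y} (path_edges (y # xs))"
| "path_edges _ = {}"

lemma path_edges_conv_nth: "path_edges p = (\<lambda>i. {p ! i, p ! Suc i}) ` {..< length p - 1}"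
  by (induction p rule: path_edges.induct) (auto simp: lessThan_Suc_eq_insert_0 image_image)

lemma is_path_iff:
  "is_path E p s t \<longleftrightarrow> p \<noteq> [] \<and> hd p = s \<and> last p = t \<and> distinct p \<and> path_edges p \<subseteq> E"
  by (auto simp: is_path_def path_edges_conv_nth)

lemma path_edges_append:
  "xs \<noteq> [] \<Longrightarrow> ys \<noteq> [] \<Longrightarrow>
   path_edges (xs @ ys) = insert {last xs, hd ys} (path_edges xs \<union> path_edges ys)"
  by (induction xs rule: path_edges.induct) (auto simp: neq_Nil_conv)

lemma path_edges_append_mono: "path_edges xs \<union> path_edges ys \<subseteq> path_edges (xs @ ys)"
  by (cases "xs = [] \<or> ys = []") (auto simp: path_edges_append)

lemma path_edges_glue:
  "last p = hd q \<Longrightarrow> p \<noteq> [] \<Longrightarrow> q \<noteq> [] \<Longrightarrow> path_edges (p @ tl q) = path_edges p \<union> path_edges q"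
  by (cases q rule: path_edges.cases) (auto simp: path_edges_append)

lemma path_edges_rev [simp]: "path_edges (rev p) = path_edges p"
proof (induction p rule: path_edges.induct)
  case (1 x y xs)
  have "rev (x # y # xs) = rev (y # xs) @ [x]" by simp
  then show ?case using "1" by (simp add: path_edges_append last_rev insert_commute del: rev.simps)
qed auto

lemma path_edges_subset: "e \<in> path_edges p \<Longrightarrow> e \<subseteq> set p"
  by (induction p rule: path_edges.induct) auto

lemma Union_path_edges: "2 \<le> length p \<Longrightarrow> \<Union> (path_edges p) = set p"
  by (induction p rule: path_edges.induct) (fastforce simp: Suc_le_eq)+

lemma path_edges_split:
  "e \<in> path_edges p \<Longrightarrow> \<exists>xs ys. p = xs @ ys \<and> xs \<noteq> [] \<and> ys \<noteq> [] \<and> e = {last xs, hd ys}"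
proof (induction p rule: path_edges.induct)
  case (1 x y zs)
  show ?case
  proof (cases "e = {x, y}")
    case True then show ?thesis by (intro exI[of _ "[x]"] exI[of _ "y # zs"]) simp
  next
    case False
    then obtain xs ys where "y # zs = xs @ ys" "xs \<noteq> []" "ys \<noteq> []" "e = {last xs, hd ys}"
      using "1" by auto
    then show ?thesis by (intro exI[of _ "x # xs"] exI[of _ ys]) simp
  qed
qed auto

lemma path_edges_short: "length p \<le> 2 \<Longrightarrow> e \<in> path_edges p \<Longrightarrow> e = {hd p, last p}"
  by (cases p rule: path_edges.cases) auto

lemma is_path_rev: "is_path E p s t \<Longrightarrow> is_path E (rev p) t s"
  by (auto simp: is_path_iff hd_rev last_rev)

lemma is_path_split:
  assumes "is_path E (xs @ x # ys) s t"
  shows "is_path E (xs @ [x]) s x" "is_path E (x # ys) x t"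
  using assms path_edges_append_mono[of "xs @ [x]" ys] path_edges_append_mono[of xs "x # ys"]
  by (auto simp: is_path_iff hd_append)

lemma is_path_glue:
  assumes "is_path E p a b" "is_path E q b c" "set p \<inter> set q = {b}"
  shows "is_path E (p @ tl q) a c" "path_edges (p @ tl q) = path_edges p \<union> path_edges q"
proof -
  from assms show edges: "path_edges (p @ tl q) = path_edges p \<union> path_edges q"
    by (auto simp: is_path_iff path_edges_glue)
  from assms(2) obtain q' where q: "q = b # q'" "b \<notin> set q'"
    by (auto simp: is_path_iff neq_Nil_conv)
  with assms have "set p \<inter> set q' = {}" by auto
  with assms q edges show "is_path E (p @ tl q) a c"
    by (auto simp: is_path_iff)
qed

lemma detour_forward:
  assumes P: "is_path E (xs @ u # ys) s t" and a: "a \<in> set ys"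
    and X: "is_path E X u a" and X_P: "set X \<inter> set (xs @ u # ys) \<subseteq> {u, a}"
  shows "\<exists>p. is_path E p s t \<and> path_edges X \<subseteq> path_edges p"
proof -
  obtain ys1 ys2 where ys: "ys = ys1 @ a # ys2" using split_list[OF a] by blast
  have P1: "is_path E (xs @ [u]) s u" using is_path_split(1)[OF P] .
  have P2: "is_path E (a # ys2) a t" using is_path_split(2)[of E "xs @ u # ys1"] P ys by simp
  have dist: "distinct (xs @ u # ys1 @ a # ys2)" using P ys by (simp add: is_path_iff)
  obtain X' where X': "X = u # X'" using X by (auto simp: is_path_iff neq_Nil_conv)
  have "set (xs @ [u]) \<inter> set X = {u}" using X_P dist X' ys by auto
  with is_path_glue[OF P1 X] X' have Y: "is_path E (xs @ u # X') s a"
    "path_edges X \<subseteq> path_edges (xs @ u # X')" by auto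
  have "a \<in> set X" using X by (auto simp: is_path_iff)
  then have "set (xs @ u # X') \<inter> set (a # ys2) = {a}"
    using X_P dist ys X' by auto
  with is_path_glue[OF Y(1) P2] Y(2) show ?thesis by auto
qed

lemma detour:
  assumes P: "is_path E P s t" and u: "u \<in> set P" and a: "a \<in> set P" "a \<noteq> u"
    and X: "is_path E X u a" and X_P: "set X \<inter> set P \<subseteq> {u, a}"
  shows "\<exists>p. is_path E p s t \<and> path_edges X \<subseteq> path_edges p"
proof -
  obtain xs ys where P_eq: "P = xs @ u # ys" using split_list[OF u] by blast
  consider "a \<in> set ys" | "a \<in> set xs" using a P_eq by auto
  then show ?thesis
  proof cases
    case 1
    with P X X_P show ?thesis unfolding P_eq by (intro detour_forward)
  next
    case 2
    have "is_path E (rev ys @ u # rev xs) t s" using is_path_rev[OF P] P_eq by simp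
    from detour_forward[OF this _ X] obtain p where "is_path E p t s" "path_edges X \<subseteq> path_edges p"
      using 2 X_P P_eq by auto
    then show ?thesis using is_path_rev by fastforce
  qed
qed

lemma path_prefix_first_in_set:
  assumes W: "is_path E (v # q) v b" and "b \<in> S" "v \<notin> S"
  shows "\<exists>W a. is_path E W v a \<and> a \<in> set q \<and> a \<in> S \<and> set W \<inter> S = {a}"
proof -
  have "b \<in> set (v # q)" using W by (auto simp: is_path_iff)
  then obtain w a r where split: "v # q = w @ a # r" "a \<in> S" "\<forall>y\<in>set w. y \<notin> S"
    using \<open>b \<in> S\<close> split_list_first_prop[of "v # q" "\<lambda>x. x \<in> S"] by blast
  with \<open>v \<notin> S\<close> obtain w' where "w = v # w'" by (cases w) auto
  with split is_path_split(1)[of E w a r] W show ?thesis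
    by (intro exI[of _ "w @ [a]"] exI[of _ a]) auto
qed

lemma path_to_st_path_avoiding:
  assumes P: "is_path E P s t" and Q: "is_path E Q s t" and v: "v \<in> set Q" "v \<noteq> u"
  shows "\<exists>W a. is_path E W v a \<and> a \<in> set P \<and> a \<noteq> u \<and> set W \<inter> set P \<subseteq> {a}"
proof (cases "v \<in> set P")
  case True
  then show ?thesis using v by (intro exI[of _ "[v]"] exI[of _ v]) (auto simp: is_path_iff)
next
  case False
  obtain q1 q2 where Q_eq: "Q = q1 @ v # q2" using split_list[OF v(1)] by blast
  have st: "s \<in> set P" "t \<in> set P" using P by (auto simp: is_path_iff)
  have "is_path E (v # q2) v t" using Q unfolding Q_eq by (rule is_path_split(2))
  from path_prefix_first_in_set[OF this st(2) False] obtain W2 a2 where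
    W2: "is_path E W2 v a2" "a2 \<in> set q2" "a2 \<in> set P" "set W2 \<inter> set P = {a2}" by blast
  have "is_path E (rev q2 @ v # rev q1) t s" using is_path_rev[OF Q] Q_eq by simp
  then have "is_path E (v # rev q1) v s" by (rule is_path_split(2))
  from path_prefix_first_in_set[OF this st(1) False] obtain W1 a1 where
    W1: "is_path E W1 v a1" "a1 \<in> set q1" "a1 \<in> set P" "set W1 \<inter> set P = {a1}" by auto
  have "a1 \<noteq> a2" using W1(2) W2(2) Q Q_eq by (auto simp: is_path_iff)
  then show ?thesis using W1 W2 by (cases "a1 = u") blast+
qed

lemma edge_on_st_path:
  assumes P: "is_path E P s t" and Q: "is_path E Q s t"
    and u: "u \<in> set P" and v: "v \<in> set Q" and uv: "{u, v} \<in> E" "u \<noteq> v"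
  shows "\<exists>p. is_path E p s t \<and> {u, v} \<in> path_edges p"
proof -
  obtain W a where W: "is_path E W v a" "a \<in> set P" "a \<noteq> u" "set W \<inter> set P \<subseteq> {a}"
    using path_to_st_path_avoiding[OF P Q v uv(2)[symmetric]] by blast
  obtain W' where W': "W = v # W'" using W(1) by (auto simp: is_path_iff neq_Nil_conv)
  have uv_path: "is_path E [u, v] u v" using uv by (auto simp: is_path_iff)
  have "set [u, v] \<inter> set W = {v}" using W u W' by auto
  from is_path_glue[OF uv_path W(1) this] W'
  have X: "is_path E (u # W) u a" "{u, v} \<in> path_edges (u # W)" by auto
  have "set (u # W) \<inter> set P \<subseteq> {u, a}" using W(4) by auto
  with detour[OF P u W(2,3) X(1)] X(2) show ?thesis by blast
qed

lemma cycle_edges_conv_path_edges: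
  assumes "c \<noteq> []"
  shows "cycle_edges c = insert {last c, hd c} (path_edges c)"
proof -
  obtain m where m: "length c = Suc m" using assms by (cases c) auto
  have "cycle_edges c = (\<lambda>i. {c ! i, c ! (Suc i mod Suc m)}) ` {..<Suc m}"
    by (auto simp: cycle_edges_def m)
  also have "\<dots> = insert {c ! m, c ! 0} ((\<lambda>i. {c ! i, c ! (Suc i mod Suc m)}) ` {..<m})"
    by (simp add: lessThan_Suc)
  also have "(\<lambda>i. {c ! i, c ! (Suc i mod Suc m)}) ` {..<m} = (\<lambda>i. {c ! i, c ! Suc i}) ` {..<m}"
    by (rule image_cong) auto
  finally show ?thesis
    using assms by (simp add: path_edges_conv_nth last_conv_nth hd_conv_nth m)
qed

lemma cycle_edges_rotate: "cycle_edges (xs @ ys) = cycle_edges (ys @ xs)"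
proof (cases "xs = [] \<or> ys = []")
  case False
  then show ?thesis
    by (simp add: cycle_edges_conv_path_edges path_edges_append insert_commute Un_commute)
qed auto

lemma distinct_hd_eq_last: "distinct xs \<Longrightarrow> hd xs = last xs \<Longrightarrow> length xs \<le> 1"
  by (cases xs rule: remdups_adj.cases) (auto split: if_splits)

lemma closing_edge_notin_path_edges:
  assumes "distinct c" "3 \<le> length c"
  shows "{last c, hd c} \<notin> path_edges c"
proof
  assume "{last c, hd c} \<in> path_edges c"
  then obtain xs ys where c: "c = xs @ ys" "xs \<noteq> []" "ys \<noteq> []" "{last xs, hd ys} = {last c, hd c}"
    by (metis path_edges_split)
  then have last_hd: "last c = last ys" "hd c = hd xs" by auto
  have dist: "set xs \<inter> set ys = {}" "distinct xs" "distinct ys" using assms(1) c(1) by auto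
  have "last xs \<in> set xs" "hd xs \<in> set xs" "hd ys \<in> set ys" "last ys \<in> set ys"
    using c(2,3) by auto
  with dist(1) c(4) last_hd have "hd xs = last xs" "hd ys = last ys"
    by (auto simp: doubleton_eq_iff)
  with distinct_hd_eq_last dist(2,3) have "length xs \<le> 1" "length ys \<le> 1" by auto
  with assms(2) c(1) show False by simp
qed

lemma cycle_edges_subset: "e \<in> cycle_edges c \<Longrightarrow> e \<subseteq> set c"
  by (cases "c = []") (auto simp: cycle_edges_def cycle_edges_conv_path_edges dest: path_edges_subset)

text \<open>Rotate c until st is its closing edge; the remaining edges form an s-t path in E.\<close>

lemma cycle_through_edge_imp_path:
  assumes cyc: "is_cycle (insert {s, t} E) c" and st: "{s, t} \<in> cycle_edges c"
  shows "\<exists>p. is_path E p s t \<and> set p = set c"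
proof -
  have c: "distinct c" "3 \<le> length c" "cycle_edges c \<subseteq> insert {s, t} E"
    using cyc by (auto simp: is_cycle_def)
  then have "c \<noteq> []" by auto
  obtain c' where c': "distinct c'" "3 \<le> length c'" "set c' = set c"
    "cycle_edges c' = cycle_edges c" "{last c', hd c'} = {s, t}"
  proof (cases "{s, t} = {last c, hd c}")
    case True
    then show ?thesis using that c by simp
  next
    case False
    then have "{s, t} \<in> path_edges c"
      using st cycle_edges_conv_path_edges[OF \<open>c \<noteq> []\<close>] by auto
    then obtain xs ys where "c = xs @ ys" "xs \<noteq> []" "ys \<noteq> []" "{s, t} = {last xs, hd ys}"
      by (metis path_edges_split)
    then show ?thesis
      using that[of "ys @ xs"] c cycle_edges_rotate[of xs ys] by (auto simp: insert_commute)
  qed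
  then have "c' \<noteq> []" by auto
  have "path_edges c' \<subseteq> E"
  proof
    fix e assume e: "e \<in> path_edges c'"
    then have "e \<noteq> {s, t}" using closing_edge_notin_path_edges[OF c'(1,2)] c'(5) by auto
    moreover have "e \<in> insert {s, t} E"
      using e c(3) c'(4) cycle_edges_conv_path_edges[OF \<open>c' \<noteq> []\<close>] by auto
    ultimately show "e \<in> E" by simp
  qed
  then have path: "is_path E c' (hd c') (last c')" using c'(1) \<open>c' \<noteq> []\<close> by (simp add: is_path_iff)
  from c'(5) consider "hd c' = s" "last c' = t" | "hd c' = t" "last c' = s"
    by (auto simp: doubleton_eq_iff)
  then show ?thesis
  proof cases
    case 1
    then show ?thesis using path c'(3) by auto
  next
    case 2
    then show ?thesis using is_path_rev[OF path] c'(3) by (intro exI[of _ "rev c'"]) auto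
  qed
qed

lemma bicon_rel_added_edgeD:
  assumes "bicon_rel (insert {s, t} E) {s, t} f" "f \<noteq> {s, t}"
  shows "\<exists>p. is_path E p s t \<and> f \<subseteq> set p"
proof -
  from assms obtain c where "is_cycle (insert {s, t} E) c" "{s, t} \<in> cycle_edges c" "f \<in> cycle_edges c"
    unfolding bicon_rel_def by blast
  with cycle_through_edge_imp_path cycle_edges_subset show ?thesis by metis
qed

lemma bicon_rel_added_edgeI:
  assumes p: "is_path E p s t" and e: "e \<in> path_edges p"
  shows "bicon_rel (insert {s, t} E) {s, t} e"
proof (cases "e = {s, t}")
  case False
  have "3 \<le> length p" using path_edges_short[OF _ e] False p by (force simp: is_path_iff)
  moreover have "cycle_edges p = insert {s, t} (path_edges p)"
    using p cycle_edges_conv_path_edges by (auto simp: is_path_iff insert_commute)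
  ultimately have "is_cycle (insert {s, t} E) p \<and> {s, t} \<in> cycle_edges p \<and> e \<in> cycle_edges p"
    using p e by (auto simp: is_cycle_def is_path_iff)
  then show ?thesis unfolding bicon_rel_def by blast
qed (simp add: bicon_rel_def)

definition st_path_vertices :: "'a set set \<Rightarrow> 'a \<Rightarrow> 'a \<Rightarrow> 'a set" where
  "st_path_vertices E s t = {v. \<exists>p. is_path E p s t \<and> v \<in> set p}"

lemma add_edge_relevant_part:
  "add_edge (relevant_part V E s t) s t =
     (st_path_vertices E s t \<union> {s, t}, insert {s, t} {e \<in> E. e \<subseteq> st_path_vertices E s t})"
  by (simp add: add_edge_def relevant_part_def st_path_vertices_def Let_def)

lemma bicon_class_of_added_edge:
  assumes "simple_graph V E"
  shows "{f \<in> snd (add_edge (V, E) s t). bicon_rel (snd (add_edge (V, E) s t)) {s, t} f}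
       = snd (add_edge (relevant_part V E s t) s t)"
proof -
  have "f \<subseteq> st_path_vertices E s t" if "bicon_rel (insert {s, t} E) {s, t} f" "f \<noteq> {s, t}" for f
    using bicon_rel_added_edgeD[OF that] by (auto simp: st_path_vertices_def)
  moreover have "bicon_rel (insert {s, t} E) {s, t} f" if f: "f \<in> E" "f \<subseteq> st_path_vertices E s t" for f
  proof -
    obtain u v where uv: "f = {u, v}" "u \<noteq> v" using assms f(1) by (auto simp: simple_graph_def)
    with f obtain P Q where "is_path E P s t" "u \<in> set P" "is_path E Q s t" "v \<in> set Q"
      by (auto simp: st_path_vertices_def)
    from edge_on_st_path[OF this(1,3,2,4)] uv f(1) obtain p where "is_path E p s t" "f \<in> path_edges p"
      by blast
    then show ?thesis by (rule bicon_rel_added_edgeI)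
  qed
  ultimately show ?thesis unfolding add_edge_relevant_part by (auto simp: add_edge_def bicon_rel_def)
qed

lemma relevant_part_no_isolated_vertices:
  assumes "s \<noteq> t"
  shows "\<Union> (snd (add_edge (relevant_part V E s t) s t)) = fst (add_edge (relevant_part V E s t) s t)"
proof -
  have "\<exists>e\<in>E. e \<subseteq> st_path_vertices E s t \<and> v \<in> e" if v: "v \<in> st_path_vertices E s t" for v
  proof -
    obtain p where p: "is_path E p s t" "v \<in> set p" using v unfolding st_path_vertices_def by blast
    have "2 \<le> length p"
      using p(1) assms by (cases p rule: remdups_adj.cases) (auto simp: is_path_iff)
    then obtain e where e: "e \<in> path_edges p" "v \<in> e" using Union_path_edges p(2) by blast
    have "e \<in> E" using e(1) p(1) by (auto simp: is_path_iff)
    moreover have "e \<subseteq> st_path_vertices E s t"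
      using path_edges_subset[OF e(1)] p(1) by (auto simp: st_path_vertices_def)
    ultimately show ?thesis using e(2) by blast
  qed
  then show ?thesis unfolding add_edge_relevant_part by auto
qed

theorem mainTheorem4:
  fixes V :: "'a set" and E :: "'a set set" and s t :: 'a
  assumes "simple_graph V E" and "s \<in> V" and "t \<in> V" and "s \<noteq> t"
  shows "\<exists>B. biconnected_component (fst (add_edge (V, E) s t)) (snd (add_edge (V, E) s t)) B
             \<and> s \<in> fst B \<and> t \<in> fst B
             \<and> B = add_edge (relevant_part V E s t) s t"
proof -
  let ?B = "add_edge (relevant_part V E s t) s t"
  have "biconnected_component (fst (add_edge (V, E) s t)) (snd (add_edge (V, E) s t)) ?B"
    unfolding biconnected_component_def
  proof (rule bexI[of _ "{s, t}"])
    show "snd ?B = {f \<in> snd (add_edge (V, E) s t). bicon_rel (snd (add_edge (V, E) s t)) {s, t} f}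
      \<and> fst ?B = \<Union> (snd ?B)"
      using bicon_class_of_added_edge[OF assms(1)] relevant_part_no_isolated_vertices[OF assms(4)] by simp
  qed (simp add: add_edge_def)
  moreover have "s \<in> fst ?B" "t \<in> fst ?B" by (simp_all add: add_edge_def)
  ultimately show ?thesis by blast
qed

end
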